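(* Let $A$ be an associative algebra, $M$ an $A$-bimodule and $H: A\otimes A\to M$ a Hochschild $2$-cocycle. Let $\{ T_\alpha : M \to A \}_{\alpha \in \Omega}$ be an $H$-twisted $\mathcal{O}$-operator family. Then $(M, \{ \prec_\alpha, \succ_\alpha, \curlyvee_{\alpha, \beta} \}_{\alpha, \beta \in \Omega})$ is an NS-family algebra, where $$u \prec_\alpha v := u \cdot T_\alpha (v), \quad u \succ_\alpha v := T_\alpha (u) \cdot v, \quad u \curlyvee_{\alpha, \beta} v := H (T_\alpha (u), T_\beta (v)), \quad u,v\in M.$$ Further, if $\{ T_\alpha : M \to A \}_{\alpha \in \Omega}$ (an $H$-twisted $\mathcal{O}$-operator family) and $\{ T'_\alpha : M' \to A' \}_{\alpha \in \Omega}$ (an $H'$-twisted $\mathcal{O}$-operator family) are twisted $\mathcal{O}$-operator families and $(\phi, \psi)$ is a morphism between them, then $\psi$ is a morphism between the induced NS-family algebras.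
   Context: $\Omega$ is a semigroup; algebras are over a field $\mathbf{k}$ of characteristic $0$. A Hochschild $2$-cocycle $H: A^{\otimes 2}\to M$ is a bilinear map with $a \cdot H (b, c) - H ( a \cdot b, c)+ H (a, b \cdot c) - H (a, b) \cdot c =0$ for all $a,b,c\in A$. An $H$-twisted $\mathcal{O}$-operator family is a collection of linear maps $\{T_\alpha: M\to A\}_{\alpha\in\Omega}$ with $T_\alpha (u) \cdot T_\beta (v) = T_{\alpha \beta} \big( T_\alpha (u) \cdot v + u \cdot T_\beta (v) + H (T_\alpha (u), T_\beta (v)) \big)$ for all $u,v\in M$, $\alpha,\beta\in\Omega$. A morphism from an $H$-twisted $\mathcal{O}$-operator family $\{T_\alpha: M\to A\}$ to an $H'$-twisted one $\{T'_\alpha: M'\to A'\}$ is a pair $(\phi,\psi)$ with $\phi:A\to A'$ an algebra homomorphism and $\psi:M\to M'$ linear such that $\psi(a\cdot u)=\phi(a)\cdot'\psi(u)$, $\psi(u\cdot a)=\psi(u)\cdot'\phi(a)$, $\phi\circ T_\alpha = T'_\alpha\circ\psi$ for all $\alpha$, and $\psi\circ H = H'\circ(\phi\otimes\phi)$. An NS-family algebra is a vector space $D$ with bilinear maps $\{ \prec_\alpha, \succ_\alpha, \curlyvee_{\alpha, \beta}\}_{\alpha, \beta \in \Omega}$ such that for all $x,y,z\in D$, $\alpha,\beta,\gamma\in\Omega$: (1) $(x \prec_\alpha y) \prec_\beta z = x \prec_{\alpha \beta} ( y \prec_\beta z + y \succ_\alpha z + y \curlyvee_{\alpha, \beta} z)$;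 (2) $(x \succ_\alpha y) \prec_\beta z = x \succ_\alpha (y \prec_\beta z)$; (3) $(x \prec_\beta y + x \succ_\alpha y + x \curlyvee_{\alpha, \beta} y) \succ_{\alpha \beta} z = x \succ_\alpha (y \succ_\beta z)$; (4) $( x \prec_\beta y + x \succ_\alpha y + x \curlyvee_{\alpha, \beta} y ) \curlyvee_{\alpha \beta, \gamma} z + (x \curlyvee_{\alpha, \beta} y) \prec_\gamma z = x \succ_\alpha (y \curlyvee_{\beta, \gamma} z) + x \curlyvee_{\alpha, \beta \gamma} ( y \prec_\gamma z + y \succ_\beta z + y \curlyvee_{\beta, \gamma} z )$. A morphism of NS-family algebras is a linear map preserving all $\prec_\alpha$, $\succ_\alpha$, $\curlyvee_{\alpha,\beta}$. *)

theory Defs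
  imports Complex_Main
begin

text \<open>A vector space over 'k is a type of class ab_group_add together with a scalar
  multiplication s with vector_space s.
  An associative algebra A is a type 'a of class ring (associative, distributive,
  not necessarily unital) with a scalar multiplication compatible with the product.\<close>

definition bilinear_map ::
  "('k::field \<Rightarrow> 'u::ab_group_add \<Rightarrow> 'u) \<Rightarrow> ('k \<Rightarrow> 'v::ab_group_add \<Rightarrow> 'v)
   \<Rightarrow> ('k \<Rightarrow> 'w::ab_group_add \<Rightarrow> 'w) \<Rightarrow> ('u \<Rightarrow> 'v \<Rightarrow> 'w) \<Rightarrow> bool" where
  "bilinear_map s1 s2 s3 f \<longleftrightarrow>
     (\<forall>x. Vector_Spaces.linear s2 s3 (f x)) \<and> (\<forall>y. Vector_Spaces.linear s1 s3 (\<lambda>x. f x y))"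

definition assoc_algebra :: "('k::field \<Rightarrow> 'a::ring \<Rightarrow> 'a) \<Rightarrow> bool" where
  "assoc_algebra sA \<longleftrightarrow> vector_space sA \<and>
     (\<forall>c x y. sA c (x * y) = sA c x * y \<and> sA c (x * y) = x * sA c y)"

definition bimodule ::
  "('k::field \<Rightarrow> 'a::ring \<Rightarrow> 'a) \<Rightarrow> ('k \<Rightarrow> 'm::ab_group_add \<Rightarrow> 'm)
   \<Rightarrow> ('a \<Rightarrow> 'm \<Rightarrow> 'm) \<Rightarrow> ('m \<Rightarrow> 'a \<Rightarrow> 'm) \<Rightarrow> bool" where
  "bimodule sA sM l r \<longleftrightarrow> vector_space sM \<and>
     bilinear_map sA sM sM l \<and> bilinear_map sM sA sM r \<and>
     (\<forall>a b u. l (a * b) u = l a (l b u)) \<and>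
     (\<forall>a b u. r (l a u) b = l a (r u b)) \<and>
     (\<forall>a b u. r u (a * b) = r (r u a) b)"

definition hochschild_2cocycle ::
  "('k::field \<Rightarrow> 'a::ring \<Rightarrow> 'a) \<Rightarrow> ('k \<Rightarrow> 'm::ab_group_add \<Rightarrow> 'm)
   \<Rightarrow> ('a \<Rightarrow> 'm \<Rightarrow> 'm) \<Rightarrow> ('m \<Rightarrow> 'a \<Rightarrow> 'm) \<Rightarrow> ('a \<Rightarrow> 'a \<Rightarrow> 'm) \<Rightarrow> bool" where
  "hochschild_2cocycle sA sM l r H \<longleftrightarrow> bilinear_map sA sA sM H \<and>
     (\<forall>a b c. l a (H b c) - H (a * b) c + H a (b * c) - r (H a b) c = 0)"

definition twisted_O_family ::
  "('k::field \<Rightarrow> 'a::ring \<Rightarrow> 'a) \<Rightarrow> ('k \<Rightarrow> 'm::ab_group_add \<Rightarrow> 'm)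
   \<Rightarrow> ('a \<Rightarrow> 'm \<Rightarrow> 'm) \<Rightarrow> ('m \<Rightarrow> 'a \<Rightarrow> 'm) \<Rightarrow> ('a \<Rightarrow> 'a \<Rightarrow> 'm)
   \<Rightarrow> ('o::semigroup_mult \<Rightarrow> 'm \<Rightarrow> 'a) \<Rightarrow> bool" where
  "twisted_O_family sA sM l r H T \<longleftrightarrow>
     (\<forall>\<alpha>. Vector_Spaces.linear sM sA (T \<alpha>)) \<and>
     (\<forall>u v \<alpha> \<beta>. T \<alpha> u * T \<beta> v =
        T (\<alpha> * \<beta>) (r u (T \<beta> v) + l (T \<alpha> u) v + H (T \<alpha> u) (T \<beta> v)))"

definition twisted_O_morphism ::
  "('k::field \<Rightarrow> 'a::ring \<Rightarrow> 'a) \<Rightarrow> ('k \<Rightarrow> 'm::ab_group_add \<Rightarrow> 'm)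
   \<Rightarrow> ('a \<Rightarrow> 'm \<Rightarrow> 'm) \<Rightarrow> ('m \<Rightarrow> 'a \<Rightarrow> 'm) \<Rightarrow> ('a \<Rightarrow> 'a \<Rightarrow> 'm)
   \<Rightarrow> ('o::semigroup_mult \<Rightarrow> 'm \<Rightarrow> 'a)
   \<Rightarrow> ('k \<Rightarrow> 'b::ring \<Rightarrow> 'b) \<Rightarrow> ('k \<Rightarrow> 'n::ab_group_add \<Rightarrow> 'n)
   \<Rightarrow> ('b \<Rightarrow> 'n \<Rightarrow> 'n) \<Rightarrow> ('n \<Rightarrow> 'b \<Rightarrow> 'n) \<Rightarrow> ('b \<Rightarrow> 'b \<Rightarrow> 'n)
   \<Rightarrow> ('o \<Rightarrow> 'n \<Rightarrow> 'b)
   \<Rightarrow> ('a \<Rightarrow> 'b) \<Rightarrow> ('m \<Rightarrow> 'n) \<Rightarrow> bool" where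
  "twisted_O_morphism sA sM l r H T sA' sM' l' r' H' T' \<phi> \<psi> \<longleftrightarrow>
     Vector_Spaces.linear sA sA' \<phi> \<and> (\<forall>a b. \<phi> (a * b) = \<phi> a * \<phi> b) \<and>
     Vector_Spaces.linear sM sM' \<psi> \<and>
     (\<forall>a u. \<psi> (l a u) = l' (\<phi> a) (\<psi> u)) \<and>
     (\<forall>a u. \<psi> (r u a) = r' (\<psi> u) (\<phi> a)) \<and>
     (\<forall>\<alpha> u. \<phi> (T \<alpha> u) = T' \<alpha> (\<psi> u)) \<and>
     (\<forall>a b. \<psi> (H a b) = H' (\<phi> a) (\<phi> b))"

definition NS_family_algebra ::
  "('k::field \<Rightarrow> 'd::ab_group_add \<Rightarrow> 'd) \<Rightarrow> ('o::semigroup_mult \<Rightarrow> 'd \<Rightarrow> 'd \<Rightarrow> 'd)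
   \<Rightarrow> ('o \<Rightarrow> 'd \<Rightarrow> 'd \<Rightarrow> 'd) \<Rightarrow> ('o \<Rightarrow> 'o \<Rightarrow> 'd \<Rightarrow> 'd \<Rightarrow> 'd) \<Rightarrow> bool" where
  "NS_family_algebra sD prec succ curly \<longleftrightarrow> vector_space sD \<and>
     (\<forall>\<alpha>. bilinear_map sD sD sD (prec \<alpha>)) \<and>
     (\<forall>\<alpha>. bilinear_map sD sD sD (succ \<alpha>)) \<and>
     (\<forall>\<alpha> \<beta>. bilinear_map sD sD sD (curly \<alpha> \<beta>)) \<and>
     (\<forall>x y z \<alpha> \<beta>. prec \<beta> (prec \<alpha> x y) z =
        prec (\<alpha> * \<beta>) x (prec \<beta> y z + succ \<alpha> y z + curly \<alpha> \<beta> y z)) \<and>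
     (\<forall>x y z \<alpha> \<beta>. prec \<beta> (succ \<alpha> x y) z = succ \<alpha> x (prec \<beta> y z)) \<and>
     (\<forall>x y z \<alpha> \<beta>. succ (\<alpha> * \<beta>) (prec \<beta> x y + succ \<alpha> x y + curly \<alpha> \<beta> x y) z =
        succ \<alpha> x (succ \<beta> y z)) \<and>
     (\<forall>x y z \<alpha> \<beta> \<gamma>.
        curly (\<alpha> * \<beta>) \<gamma> (prec \<beta> x y + succ \<alpha> x y + curly \<alpha> \<beta> x y) z
          + prec \<gamma> (curly \<alpha> \<beta> x y) z =
        succ \<alpha> x (curly \<beta> \<gamma> y z)
          + curly \<alpha> (\<beta> * \<gamma>) x (prec \<gamma> y z + succ \<beta> y z + curly \<beta> \<gamma> y z))"

definition NS_family_morphism ::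
  "('k::field \<Rightarrow> 'd::ab_group_add \<Rightarrow> 'd) \<Rightarrow> ('o::semigroup_mult \<Rightarrow> 'd \<Rightarrow> 'd \<Rightarrow> 'd)
   \<Rightarrow> ('o \<Rightarrow> 'd \<Rightarrow> 'd \<Rightarrow> 'd) \<Rightarrow> ('o \<Rightarrow> 'o \<Rightarrow> 'd \<Rightarrow> 'd \<Rightarrow> 'd)
   \<Rightarrow> ('k \<Rightarrow> 'e::ab_group_add \<Rightarrow> 'e) \<Rightarrow> ('o \<Rightarrow> 'e \<Rightarrow> 'e \<Rightarrow> 'e)
   \<Rightarrow> ('o \<Rightarrow> 'e \<Rightarrow> 'e \<Rightarrow> 'e) \<Rightarrow> ('o \<Rightarrow> 'o \<Rightarrow> 'e \<Rightarrow> 'e \<Rightarrow> 'e)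
   \<Rightarrow> ('d \<Rightarrow> 'e) \<Rightarrow> bool" where
  "NS_family_morphism sD prec succ curly sE prec' succ' curly' f \<longleftrightarrow>
     Vector_Spaces.linear sD sE f \<and>
     (\<forall>\<alpha> x y. f (prec \<alpha> x y) = prec' \<alpha> (f x) (f y)) \<and>
     (\<forall>\<alpha> x y. f (succ \<alpha> x y) = succ' \<alpha> (f x) (f y)) \<and>
     (\<forall>\<alpha> \<beta> x y. f (curly \<alpha> \<beta> x y) = curly' \<alpha> \<beta> (f x) (f y))"

end

theory Submission
  imports Defs
begin

text \<open>Each NS-family axiom is one identity of the bimodule, the cocycle or the twisted
  \<open>\<O>\<close>-operator family in disguise: rewrite every product \<open>T\<^sub>\<alpha> u \<cdot> T\<^sub>\<beta> v\<close> by
  \<open>T\<^sub>\<alpha>\<^sub>\<beta>(\<dots>)\<close> and read the axiom backwards.  Axioms (1)--(3) are the three associativity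
  laws of the bimodule; axiom (4) is the cocycle identity evaluated at
  \<open>(T\<^sub>\<alpha> x, T\<^sub>\<beta> y, T\<^sub>\<gamma> z)\<close>.\<close>

lemma bilinear_map_compose:
  assumes "bilinear_map s1 s2 s3 f"
    and "Vector_Spaces.linear t1 s1 g" and "Vector_Spaces.linear t2 s2 h"
  shows "bilinear_map t1 t2 s3 (\<lambda>x y. f (g x) (h y))"
proof -
  have "Vector_Spaces.linear s2 s3 (f x)" and "Vector_Spaces.linear s1 s3 (\<lambda>x. f x y)" for x y
    using assms(1) by (simp_all add: bilinear_map_def)
  from Vector_Spaces.linear_compose[OF assms(3) this(1)]
    and Vector_Spaces.linear_compose[OF assms(2) this(2)]
  show ?thesis
    by (simp add: bilinear_map_def comp_def)
qed

lemma twisted_O_family_mult: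
  assumes "twisted_O_family sA sM l r H T"
  shows "T \<alpha> u * T \<beta> v = T (\<alpha> * \<beta>) (r u (T \<beta> v) + l (T \<alpha> u) v + H (T \<alpha> u) (T \<beta> v))"
  using assms by (simp add: twisted_O_family_def)

lemma hochschild_2cocycle_eq:
  assumes "hochschild_2cocycle sA sM l r H"
  shows "H (a * b) c + r (H a b) c = l a (H b c) + H a (b * c)"
proof -
  have "l a (H b c) - H (a * b) c + H a (b * c) - r (H a b) c = 0"
    using assms by (simp add: hochschild_2cocycle_def)
  then show ?thesis
    by (simp add: algebra_simps)
qed

lemma NS_prec_prec:
  assumes "bimodule sA sM l r" and "twisted_O_family sA sM l r H T"
  shows "r (r x (T \<alpha> y)) (T \<beta> z) =
    r x (T (\<alpha> * \<beta>) (r y (T \<beta> z) + l (T \<alpha> y) z + H (T \<alpha> y) (T \<beta> z)))"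
  using assms by (simp add: bimodule_def twisted_O_family_mult[symmetric])

lemma NS_succ_prec:
  assumes "bimodule sA sM l r"
  shows "r (l (T \<alpha> x) y) (T \<beta> z) = l (T \<alpha> x) (r y (T \<beta> z))"
  using assms by (simp add: bimodule_def)

lemma NS_succ_succ:
  assumes "bimodule sA sM l r" and "twisted_O_family sA sM l r H T"
  shows "l (T (\<alpha> * \<beta>) (r x (T \<beta> y) + l (T \<alpha> x) y + H (T \<alpha> x) (T \<beta> y))) z =
    l (T \<alpha> x) (l (T \<beta> y) z)"
  using assms by (simp add: bimodule_def twisted_O_family_mult[symmetric])

lemma NS_curly:
  assumes "hochschild_2cocycle sA sM l r H" and "twisted_O_family sA sM l r H T"
  shows "H (T (\<alpha> * \<beta>) (r x (T \<beta> y) + l (T \<alpha> x) y + H (T \<alpha> x) (T \<beta> y))) (T \<gamma> z)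
      + r (H (T \<alpha> x) (T \<beta> y)) (T \<gamma> z) =
    l (T \<alpha> x) (H (T \<beta> y) (T \<gamma> z))
      + H (T \<alpha> x) (T (\<beta> * \<gamma>) (r y (T \<gamma> z) + l (T \<beta> y) z + H (T \<beta> y) (T \<gamma> z)))"
  using assms by (simp add: twisted_O_family_mult[symmetric] hochschild_2cocycle_eq)

lemma NS_family_algebra_of_twisted_O_family:
  assumes bimod: "bimodule sA sM l r"
    and cocycle: "hochschild_2cocycle sA sM l r H"
    and family: "twisted_O_family sA sM l r H T"
  shows "NS_family_algebra sM (\<lambda>\<alpha> u v. r u (T \<alpha> v)) (\<lambda>\<alpha> u v. l (T \<alpha> u) v)
           (\<lambda>\<alpha> \<beta> u v. H (T \<alpha> u) (T \<beta> v))"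
proof -
  have vM: "vector_space sM" and bl: "bilinear_map sA sM sM l"
    and br: "bilinear_map sM sA sM r"
    using bimod by (auto simp: bimodule_def)
  have bH: "bilinear_map sA sA sM H"
    using cocycle by (simp add: hochschild_2cocycle_def)
  have linT: "Vector_Spaces.linear sM sA (T \<alpha>)" for \<alpha>
    using family by (simp add: twisted_O_family_def)
  have lin_id: "Vector_Spaces.linear sM sM id"
    using vM by (rule vector_space.linear_id)
  show ?thesis
    unfolding NS_family_algebra_def
    by (intro conjI allI vM
        bilinear_map_compose[OF br lin_id linT, unfolded id_apply]
        bilinear_map_compose[OF bl linT lin_id, unfolded id_apply]
        bilinear_map_compose[OF bH linT linT]
        NS_prec_prec[OF bimod family] NS_succ_prec[OF bimod]
        NS_succ_succ[OF bimod family] NS_curly[OF cocycle family])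
qed

lemma NS_family_morphism_of_twisted_O_morphism:
  assumes "twisted_O_morphism sA sM l r H T sA' sM' l' r' H' T' \<phi> \<psi>"
  shows "NS_family_morphism sM (\<lambda>\<alpha> u v. r u (T \<alpha> v)) (\<lambda>\<alpha> u v. l (T \<alpha> u) v)
           (\<lambda>\<alpha> \<beta> u v. H (T \<alpha> u) (T \<beta> v))
           sM' (\<lambda>\<alpha> u v. r' u (T' \<alpha> v)) (\<lambda>\<alpha> u v. l' (T' \<alpha> u) v)
           (\<lambda>\<alpha> \<beta> u v. H' (T' \<alpha> u) (T' \<beta> v)) \<psi>"
  using assms by (simp add: NS_family_morphism_def twisted_O_morphism_def)

theorem proposition3p18:
  fixes sA :: "'k::field_char_0 \<Rightarrow> 'a::ring \<Rightarrow> 'a"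
    and sM :: "'k \<Rightarrow> 'm::ab_group_add \<Rightarrow> 'm"
    and l :: "'a \<Rightarrow> 'm \<Rightarrow> 'm" and r :: "'m \<Rightarrow> 'a \<Rightarrow> 'm"
    and H :: "'a \<Rightarrow> 'a \<Rightarrow> 'm"
    and T :: "'o::semigroup_mult \<Rightarrow> 'm \<Rightarrow> 'a"
    and sA' :: "'k \<Rightarrow> 'b::ring \<Rightarrow> 'b"
    and sM' :: "'k \<Rightarrow> 'n::ab_group_add \<Rightarrow> 'n"
    and l' :: "'b \<Rightarrow> 'n \<Rightarrow> 'n" and r' :: "'n \<Rightarrow> 'b \<Rightarrow> 'n"
    and H' :: "'b \<Rightarrow> 'b \<Rightarrow> 'n"
    and T' :: "'o \<Rightarrow> 'n \<Rightarrow> 'b"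
    and \<phi> :: "'a \<Rightarrow> 'b" and \<psi> :: "'m \<Rightarrow> 'n"
  assumes "assoc_algebra sA"
    and "bimodule sA sM l r"
    and "hochschild_2cocycle sA sM l r H"
    and "twisted_O_family sA sM l r H T"
  shows "NS_family_algebra sM (\<lambda>\<alpha> u v. r u (T \<alpha> v)) (\<lambda>\<alpha> u v. l (T \<alpha> u) v)
           (\<lambda>\<alpha> \<beta> u v. H (T \<alpha> u) (T \<beta> v))
       \<and> (assoc_algebra sA' \<and> bimodule sA' sM' l' r' \<and> hochschild_2cocycle sA' sM' l' r' H'
          \<and> twisted_O_family sA' sM' l' r' H' T'
          \<and> twisted_O_morphism sA sM l r H T sA' sM' l' r' H' T' \<phi> \<psi>
         \<longrightarrow> NS_family_morphism sM (\<lambda>\<alpha> u v. r u (T \<alpha> v)) (\<lambda>\<alpha> u v. l (T \<alpha> u) v)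
               (\<lambda>\<alpha> \<beta> u v. H (T \<alpha> u) (T \<beta> v))
               sM' (\<lambda>\<alpha> u v. r' u (T' \<alpha> v)) (\<lambda>\<alpha> u v. l' (T' \<alpha> u) v)
               (\<lambda>\<alpha> \<beta> u v. H' (T' \<alpha> u) (T' \<beta> v)) \<psi>)"
  using NS_family_algebra_of_twisted_O_family[OF assms(2-4)]
    NS_family_morphism_of_twisted_O_morphism
  by blast

end
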